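(* Let $n\geq2$ be an integer, $b:=-n+i$, and $D\subset\{0,1,\ldots,n^2\}$. Let $\alpha\in E_{n,D}$ and suppose there is exactly one sequence $(\alpha_j)_{j\ge1}$ with $\alpha_j\in D-D$ for all $j$ and $\alpha=\sum_{j\ge1}\alpha_jb^{-j}$. Then $$C_{n,D}\cap(C_{n,D}+\alpha)=\Big\{\sum_{j\ge1}z_jb^{-j}: z_j\in D\cap(D+\alpha_j)\text{ for all }j\Big\}.$$
   Context: $C_{n,D}$ is the attractor of $\{z\mapsto b^{-1}(z+d): d\in D\}$, i.e. $C_{n,D}=\{\sum_{j\ge1}d_jb^{-j}: d_j\in D\}$. $E_{n,D}$ is the attractor of $\{z\mapsto b^{-1}(z+\delta):\delta\in D-D\}$, i.e. $E_{n,D}=\{\sum_{j\ge1}\delta_jb^{-j}: \delta_j\in D-D\}$, where $D-D=\{d-d':d,d'\in D\}$. *)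

theory Defs
  imports "HOL-Analysis.Analysis"
begin

text \<open>Radix expansion  sum_{j>=1} d_j b^{-j}; digit sequences are indexed from 0,
  so d j plays the role of d_{j+1}.\<close>
definition radix_val :: "complex \<Rightarrow> (nat \<Rightarrow> int) \<Rightarrow> complex" where
  "radix_val b d = (\<Sum>j. of_int (d j) / b ^ Suc j)"

definition diffset :: "int set \<Rightarrow> int set" where
  "diffset D = {d - d' | d d'. d \<in> D \<and> d' \<in> D}"

definition Cset :: "nat \<Rightarrow> int set \<Rightarrow> complex set" where
  "Cset n D = {radix_val (- of_nat n + \<i>) d | d. \<forall>j. d j \<in> D}"

definition Eset :: "nat \<Rightarrow> int set \<Rightarrow> complex set" where
  "Eset n D = {radix_val (- of_nat n + \<i>) d | d. \<forall>j. d j \<in> diffset D}"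

end

theory Submission
  imports Defs
begin

text \<open>Bounded digit sequences have convergent expansions in any base of modulus greater
  than 1, so the expansion map is additive on them. If \<open>z\<close> and \<open>w\<close> are digit sequences in
  \<open>D\<close> whose values differ by \<open>\<alpha>\<close>, then \<open>z - w\<close> is an expansion of \<open>\<alpha>\<close> with digits in
  \<open>D - D\<close>; uniqueness forces \<open>z - w = a\<close>, i.e. \<open>z j \<in> D \<inter> (D + a j)\<close>. Conversely,
  subtracting \<open>a\<close> from such a \<open>z\<close> gives a digit sequence in \<open>D\<close> whose value is smaller
  by \<open>\<alpha>\<close>.\<close>

lemma summable_radix:
  fixes b :: complex and d :: "nat \<Rightarrow> int"
  assumes "\<And>j. \<bar>d j\<bar> \<le> K" and "norm b > 1"
  shows "summable (\<lambda>j. of_int (d j) / b ^ Suc j)"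
proof (rule summable_comparison_test')
  have "inverse (norm b) < 1" using assms(2) by (simp add: inverse_less_1_iff)
  then show "summable (\<lambda>j. of_int K / norm b * inverse (norm b) ^ j)"
    by (intro summable_mult summable_geometric) simp
  fix j :: nat
  have "\<bar>real_of_int (d j)\<bar> \<le> of_int K"
    using assms(1)[of j] by (simp flip: of_int_abs del: of_int_abs)
  then have "norm (of_int (d j) / b ^ Suc j) \<le> of_int K / norm b ^ Suc j"
    by (simp add: norm_divide norm_power divide_right_mono del: power_Suc)
  also have "\<dots> = of_int K / norm b * inverse (norm b) ^ j"
    by (simp add: field_simps power_inverse)
  finally show "norm (of_int (d j) / b ^ Suc j) \<le> of_int K / norm b * inverse (norm b) ^ j" .
qed

lemma radix_val_diff:
  assumes "\<And>j. \<bar>x j\<bar> \<le> K" and "\<And>j. \<bar>y j\<bar> \<le> L" and "norm b > 1"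
  shows "radix_val b (\<lambda>j. x j - y j) = radix_val b x - radix_val b y"
proof -
  have "radix_val b x - radix_val b y = (\<Sum>j. of_int (x j) / b ^ Suc j - of_int (y j) / b ^ Suc j)"
    unfolding radix_val_def using assms by (intro suminf_diff summable_radix)
  then show ?thesis by (simp add: radix_val_def diff_divide_distrib)
qed

lemma norm_neg_of_nat_plus_ii_gt_1:
  assumes "n \<noteq> 0"
  shows "norm (- of_nat n + \<i>) > 1"
proof -
  have "1 < (real n)\<^sup>2 + 1" using assms by simp
  then show ?thesis by (simp add: cmod_def real_less_rsqrt)
qed

lemma abs_diffset_le:
  assumes "\<And>d. d \<in> D \<Longrightarrow> \<bar>d\<bar> \<le> K" and "x \<in> diffset D"
  shows "\<bar>x\<bar> \<le> 2 * K"
proof -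
  obtain d d' where "x = d - d'" "d \<in> D" "d' \<in> D" using assms(2) by (auto simp: diffset_def)
  with assms(1)[of d] assms(1)[of d'] show ?thesis by linarith
qed

lemma radix_translate_digits_unique:
  assumes "norm b > 1" and D_bound: "\<And>d. d \<in> D \<Longrightarrow> \<bar>d\<bar> \<le> K"
    and unique: "\<And>a'. \<forall>j. a' j \<in> diffset D \<Longrightarrow> radix_val b a' = radix_val b a \<Longrightarrow> a' = a"
    and z: "\<forall>j. z j \<in> D" and w: "\<forall>j. w j \<in> D"
    and val: "radix_val b z = radix_val b w + radix_val b a"
  shows "z j \<in> D \<inter> (\<lambda>d. d + a j) ` D"
proof -
  have "\<forall>j. z j - w j \<in> diffset D" using z w by (auto simp: diffset_def)
  moreover have "radix_val b (\<lambda>j. z j - w j) = radix_val b z - radix_val b w"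
    using z w D_bound \<open>norm b > 1\<close> by (intro radix_val_diff) auto
  with val have "radix_val b (\<lambda>j. z j - w j) = radix_val b a" by simp
  ultimately have "(\<lambda>j. z j - w j) = a" by (rule unique)
  then have "z j = w j + a j" using fun_cong[of _ a j] by force
  then have "z j \<in> (\<lambda>d. d + a j) ` D" using w by blast
  with z show ?thesis by blast
qed

lemma radix_translate_digits_exist:
  assumes "norm b > 1" and D_bound: "\<And>d. d \<in> D \<Longrightarrow> \<bar>d\<bar> \<le> K"
    and a: "\<forall>j. a j \<in> diffset D" and z: "\<forall>j. z j \<in> D \<inter> (\<lambda>d. d + a j) ` D"
  obtains w where "\<forall>j. w j \<in> D" and "radix_val b z = radix_val b w + radix_val b a"
proof
  show "\<forall>j. z j - a j \<in> D"
  proof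
    fix j
    obtain d where "d \<in> D" "z j = d + a j" using z by blast
    then show "z j - a j \<in> D" by simp
  qed
  have "radix_val b (\<lambda>j. z j - a j) = radix_val b z - radix_val b a"
  proof (rule radix_val_diff)
    show "\<bar>z j\<bar> \<le> K" for j using z D_bound by blast
    show "\<bar>a j\<bar> \<le> 2 * K" for j using a by (intro abs_diffset_le[where D = D]) (auto intro: D_bound)
  qed fact
  then show "radix_val b z = radix_val b (\<lambda>j. z j - a j) + radix_val b a" by simp
qed

lemma radix_digit_set_inter_translate:
  assumes "norm b > 1" and D_bound: "\<And>d. d \<in> D \<Longrightarrow> \<bar>d\<bar> \<le> K"
    and a: "\<forall>j. a j \<in> diffset D"
    and unique: "\<And>a'. \<forall>j. a' j \<in> diffset D \<Longrightarrow> radix_val b a' = radix_val b a \<Longrightarrow> a' = a"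
  shows "{radix_val b z | z. \<forall>j. z j \<in> D} \<inter>
           (\<lambda>x. x + radix_val b a) ` {radix_val b z | z. \<forall>j. z j \<in> D} =
         {radix_val b z | z. \<forall>j. z j \<in> D \<inter> (\<lambda>d. d + a j) ` D}"
proof (intro equalityI subsetI)
  fix x assume "x \<in> {radix_val b z | z. \<forall>j. z j \<in> D} \<inter>
                    (\<lambda>x. x + radix_val b a) ` {radix_val b z | z. \<forall>j. z j \<in> D}"
  then obtain z w where "\<forall>j. z j \<in> D" "\<forall>j. w j \<in> D" "x = radix_val b z"
    "radix_val b z = radix_val b w + radix_val b a" by auto
  then show "x \<in> {radix_val b z | z. \<forall>j. z j \<in> D \<inter> (\<lambda>d. d + a j) ` D}"
    using radix_translate_digits_unique[OF assms(1) D_bound unique] by blast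
next
  fix x assume "x \<in> {radix_val b z | z. \<forall>j. z j \<in> D \<inter> (\<lambda>d. d + a j) ` D}"
  then obtain z where z: "\<forall>j. z j \<in> D \<inter> (\<lambda>d. d + a j) ` D" and x: "x = radix_val b z" by auto
  obtain w where "\<forall>j. w j \<in> D" "radix_val b z = radix_val b w + radix_val b a"
    using radix_translate_digits_exist[OF assms(1) D_bound a z] .
  with z x show "x \<in> {radix_val b z | z. \<forall>j. z j \<in> D} \<inter>
                    (\<lambda>x. x + radix_val b a) ` {radix_val b z | z. \<forall>j. z j \<in> D}" by blast
qed

theorem lemma5p4:
  fixes n :: nat and D :: "int set" and \<alpha> :: complex and a :: "nat \<Rightarrow> int"
  assumes "n \<ge> 2"
    and "D \<subseteq> {0..int n ^ 2}"
    and "\<alpha> \<in> Eset n D"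
    and "\<forall>j. a j \<in> diffset D"
    and "\<alpha> = radix_val (- of_nat n + \<i>) a"
    and "\<forall>a'. (\<forall>j. a' j \<in> diffset D) \<and> \<alpha> = radix_val (- of_nat n + \<i>) a' \<longrightarrow> a' = a"
  shows "Cset n D \<inter> ((\<lambda>z. z + \<alpha>) ` Cset n D) =
         {radix_val (- of_nat n + \<i>) z | z. \<forall>j. z j \<in> D \<inter> ((\<lambda>d. d + a j) ` D)}"
  unfolding Cset_def assms(5)
proof (rule radix_digit_set_inter_translate)
  show "norm (- of_nat n + \<i>) > 1" using assms(1) by (intro norm_neg_of_nat_plus_ii_gt_1) simp
  show "\<bar>d\<bar> \<le> int n ^ 2" if "d \<in> D" for d using assms(2) that by auto
  show "a' = a" if "\<forall>j. a' j \<in> diffset D"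
    and "radix_val (- of_nat n + \<i>) a' = radix_val (- of_nat n + \<i>) a" for a'
    using assms(5,6) that by auto
qed fact

end
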